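(* There exists a hypothesis class $\mathcal H$ of VC dimension $1$ such that every protocol that learns $\mathcal H$ in the agnostic case with error parameter $\epsilon$ has sample complexity at least $\tilde\Omega(1/\epsilon)$.
   Context: Communication model: Let $\mathcal X$ be a domain and $\mathcal Z=\mathcal X\times\{\pm1\}$ the set of examples. A sample is a finite sequence of examples. Alice receives a sample $S_a$ and Bob a sample $S_b$; the joint sample $S=(S_a,S_b)$ is their concatenation, arbitrarily split. A deterministic protocol proceeds by messages, each either a single example from the sender's own input sample or a single bit, depending only on the sender's input and previous messages; output is determined by the messages. Each example or bit costs one unit; sample complexity is the maximal number of units transmitted. $L_S(h)=\frac{1}{|S|}\sum_{(x,y)\in S}1[h(x)\ne y]$. A protocol learns $\mathcal H$ in the agnostic case with error $\epsilon$ if for every input sample $S$ (no realizability assumption) it outputs a hypothesis $h:\mathcal X\to\{\pm1\}$ (not necessarily in $\mathcal H$) with $L_S(h)\le\min_{f\in\mathcal H}L_S(f)+\epsilon$. $\tilde\Omega$ denotes a lower bound up to logarithmic factors. *)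

theory Defs
  imports Complex_Main
begin

text \<open>Labels in {+1,-1} are represented by bool (True = +1, False = -1).\<close>

type_synonym 'x example = "'x \<times> bool"
type_synonym 'x sample = "'x example list"

definition emp_loss :: "('x \<Rightarrow> bool) \<Rightarrow> 'x sample \<Rightarrow> real" where
  "emp_loss h S = real (length (filter (\<lambda>(x, y). h x \<noteq> y) S)) / real (length S)"

definition shatters :: "('x \<Rightarrow> bool) set \<Rightarrow> 'x set \<Rightarrow> bool" where
  "shatters H A \<longleftrightarrow> (\<forall>B \<subseteq> A. \<exists>h \<in> H. \<forall>x \<in> A. h x = (x \<in> B))"

definition VC_dim_eq :: "('x \<Rightarrow> bool) set \<Rightarrow> nat \<Rightarrow> bool" where
  "VC_dim_eq H d \<longleftrightarrow>
     (\<exists>A. finite A \<and> card A = d \<and> shatters H A) \<and>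
     (\<forall>A. finite A \<and> shatters H A \<longrightarrow> card A \<le> d)"

datatype 'x message = Example "'x example" | Bit bool
datatype party = Alice | Bob

text \<open>A deterministic protocol: who speaks next (or halting, None) is determined by the
  transcript; each party's message depends on its own input and the transcript;
  the output hypothesis is determined by the transcript.\<close>
record 'x protocol =
  turn   :: "'x message list \<Rightarrow> party option"
  alice  :: "'x sample \<Rightarrow> 'x message list \<Rightarrow> 'x message"
  bob    :: "'x sample \<Rightarrow> 'x message list \<Rightarrow> 'x message"
  out :: "'x message list \<Rightarrow> ('x \<Rightarrow> bool)"

definition valid_protocol :: "'x protocol \<Rightarrow> bool" where
  "valid_protocol P \<longleftrightarrow>
     (\<forall>S t z. (alice P S t = Example z \<longrightarrow> z \<in> set S) \<and>
              (bob P S t = Example z \<longrightarrow> z \<in> set S))"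

definition step :: "'x protocol \<Rightarrow> 'x sample \<Rightarrow> 'x sample \<Rightarrow> 'x message list \<Rightarrow> 'x message list" where
  "step P Sa Sb t = (case turn P t of
       None \<Rightarrow> t
     | Some Alice \<Rightarrow> t @ [alice P Sa t]
     | Some Bob \<Rightarrow> t @ [bob P Sb t])"

definition transcript :: "'x protocol \<Rightarrow> 'x sample \<Rightarrow> 'x sample \<Rightarrow> nat \<Rightarrow> 'x message list" where
  "transcript P Sa Sb n = (step P Sa Sb ^^ n) []"

text \<open>Sample complexity at most n: on every input the protocol halts after at most n
  transmitted units (examples or bits).\<close>
definition complexity_le :: "'x protocol \<Rightarrow> nat \<Rightarrow> bool" where
  "complexity_le P n \<longleftrightarrow> (\<forall>Sa Sb. turn P (transcript P Sa Sb n) = None)"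

text \<open>Agnostic learning with error eps (given that the protocol halts within n units).\<close>
definition learns_agnostic :: "'x protocol \<Rightarrow> nat \<Rightarrow> ('x \<Rightarrow> bool) set \<Rightarrow> real \<Rightarrow> bool" where
  "learns_agnostic P n H eps \<longleftrightarrow>
     (\<forall>Sa Sb. emp_loss (out P (transcript P Sa Sb n)) (Sa @ Sb)
                \<le> (INF f\<in>H. emp_loss f (Sa @ Sb)) + eps)"

end

theory Submission imports Defs begin

text \<open>The class of point indicators on the reals has VC dimension 1. For \<open>A \<subseteq> {1..m}\<close> let
  Alice hold the points \<open>1..m\<close> labelled by membership in \<open>A\<close> and Bob the same points labelled by
  non-membership. These \<open>2^m\<close> inputs form a fooling set: if \<open>A\<close> and \<open>B\<close> produced the same
  transcript, so would the crossed inputs \<open>(A, B)\<close> and \<open>(B, A)\<close>, and one hypothesis would then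
  make \<open>2m\<close> mistakes on the two crossed samples together, whereas suitable point indicators
  make only \<open>2m - 2\<close>; this contradicts \<open>\<epsilon>\<close>-learning once \<open>2\<epsilon>m < 1\<close>. A transcript of at most
  \<open>n\<close> units over an alphabet of \<open>2m + 2\<close> messages takes at most \<open>(n+1)(2m+2)^n\<close> values, so
  \<open>m \<lesssim> n log m\<close>, and \<open>m \<approx> 1/(4\<epsilon>)\<close> gives \<open>n \<gtrsim> 1/(\<epsilon> log(1/\<epsilon>))\<close>.\<close>

lemma transcript_0 [simp]: "transcript P Sa Sb 0 = []"
  by (simp add: transcript_def)

lemma transcript_Suc: "transcript P Sa Sb (Suc k) = step P Sa Sb (transcript P Sa Sb k)"
  by (simp add: transcript_def)

lemma step_cases: "step P Sa Sb t = t \<or> (\<exists>m. step P Sa Sb t = t @ [m])"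
  by (auto simp: step_def split: option.splits party.splits)

lemma step_crossed: "step P Sa Sb' t = step P Sa Sb t \<or> step P Sa Sb' t = step P Sa' Sb' t"
  by (auto simp: step_def split: option.splits party.splits)

lemma length_transcript_le: "length (transcript P Sa Sb k) \<le> k"
proof (induction k)
  case (Suc k)
  then show ?case
    using step_cases[of P Sa Sb "transcript P Sa Sb k"] by (auto simp: transcript_Suc)
qed simp

lemma transcript_add_prefix: "\<exists>ys. transcript P Sa Sb (k + j) = transcript P Sa Sb k @ ys"
proof (induction j)
  case (Suc j)
  then show ?case
    using step_cases[of P Sa Sb "transcript P Sa Sb (k + j)"] by (force simp: transcript_Suc)
qed simp

lemma transcript_full_or_halted:
  "length (transcript P Sa Sb k) = k \<or> step P Sa Sb (transcript P Sa Sb k) = transcript P Sa Sb k"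
proof (induction k)
  case (Suc k)
  then show ?case
    using step_cases[of P Sa Sb "transcript P Sa Sb k"] by (auto simp: transcript_Suc)
qed simp

lemma transcript_halted:
  "step P Sa Sb (transcript P Sa Sb k) = transcript P Sa Sb k
   \<Longrightarrow> transcript P Sa Sb (k + j) = transcript P Sa Sb k"
  by (induction j) (auto simp: transcript_Suc)

lemma take_transcript:
  assumes "k \<le> n"
  shows "take k (transcript P Sa Sb n) = transcript P Sa Sb k"
proof -
  have n: "n = k + (n - k)" using assms by simp
  from transcript_full_or_halted[of P Sa Sb k] show ?thesis
  proof
    assume "length (transcript P Sa Sb k) = k"
    moreover obtain ys where "transcript P Sa Sb (k + (n - k)) = transcript P Sa Sb k @ ys"
      using transcript_add_prefix by blast
    ultimately show ?thesis using n by (metis append_eq_conv_conj)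
  next
    assume "step P Sa Sb (transcript P Sa Sb k) = transcript P Sa Sb k"
    then have "transcript P Sa Sb n = transcript P Sa Sb k"
      using transcript_halted n by metis
    then show ?thesis using length_transcript_le by simp
  qed
qed

lemma transcript_rectangle:
  assumes same: "transcript P Sa Sb n = transcript P Sa' Sb' n"
  shows "transcript P Sa Sb' n = transcript P Sa Sb n"
proof -
  let ?T = "transcript P Sa Sb n"
  have "transcript P Sa Sb' k = take k ?T" if "k \<le> n" for k
    using that
  proof (induction k)
    case 0
    show ?case by simp
  next
    case (Suc k)
    let ?t = "take k ?T"
    have "transcript P Sa Sb k = ?t" "transcript P Sa' Sb' k = ?t"
      using Suc.prems take_transcript same by (metis Suc_leD)+
    moreover have "transcript P Sa Sb (Suc k) = take (Suc k) ?T"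
      "transcript P Sa' Sb' (Suc k) = take (Suc k) ?T"
      using Suc.prems take_transcript same by metis+
    ultimately have "step P Sa Sb ?t = take (Suc k) ?T" "step P Sa' Sb' ?t = take (Suc k) ?T"
      by (simp_all add: transcript_Suc)
    moreover have "transcript P Sa Sb' (Suc k) = step P Sa Sb' ?t"
      using Suc by (simp add: transcript_Suc)
    ultimately show ?case using step_crossed by metis
  qed
  then show ?thesis using take_transcript length_transcript_le by simp
qed

lemma set_transcript_subset:
  assumes "valid_protocol P"
  shows "set (transcript P Sa Sb k) \<subseteq> range Bit \<union> Example ` (set Sa \<union> set Sb)"
proof (induction k)
  case 0
  show ?case by simp
next
  case (Suc k)
  let ?t = "transcript P Sa Sb k"
  have "alice P Sa ?t \<in> range Bit \<union> Example ` (set Sa \<union> set Sb)"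
    "bob P Sb ?t \<in> range Bit \<union> Example ` (set Sa \<union> set Sb)"
    using assms unfolding valid_protocol_def
    by (cases "alice P Sa ?t"; cases "bob P Sb ?t"; auto)+
  with Suc show ?case by (auto simp: transcript_Suc step_def split: option.splits party.splits)
qed

lemma card_lists_length_le_bound:
  assumes "finite M" "card M \<le> K" "1 \<le> K"
  shows "card {xs. set xs \<subseteq> M \<and> length xs \<le> n} \<le> (n + 1) * K ^ n"
proof -
  have "card {xs. set xs \<subseteq> M \<and> length xs \<le> n} = (\<Sum>i\<le>n. card M ^ i)"
    using assms(1) by (rule card_lists_length_le)
  also have "\<dots> \<le> (\<Sum>i\<le>n. K ^ n)"
  proof (rule sum_mono)
    fix i assume "i \<in> {..n}"
    then have "card M ^ i \<le> K ^ i" "K ^ i \<le> K ^ n"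
      using assms by (auto intro: power_mono power_increasing)
    then show "card M ^ i \<le> K ^ n" by linarith
  qed
  finally show ?thesis by simp
qed

definition mistakes :: "('x \<Rightarrow> bool) \<Rightarrow> 'x sample \<Rightarrow> nat" where
  "mistakes h S = length (filter (\<lambda>(x, y). h x \<noteq> y) S)"

lemma emp_loss_mistakes: "emp_loss h S = real (mistakes h S) / real (length S)"
  by (simp add: emp_loss_def mistakes_def)

lemma mistakes_append: "mistakes h (S @ T) = mistakes h S + mistakes h T"
  by (simp add: mistakes_def)

lemma INF_emp_loss_le: "g \<in> H \<Longrightarrow> (INF f\<in>H. emp_loss f S) \<le> emp_loss g S"
  by (rule cINF_lower) (auto intro!: bdd_belowI[where m=0] simp: emp_loss_def)

lemma learns_agnostic_mistakes:
  assumes "learns_agnostic P n H eps" "g \<in> H" "Sa @ Sb \<noteq> []"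
  shows "real (mistakes (out P (transcript P Sa Sb n)) (Sa @ Sb))
    \<le> real (mistakes g (Sa @ Sb)) + eps * real (length (Sa @ Sb))"
proof -
  define S where "S = Sa @ Sb"
  define h where "h = out P (transcript P Sa Sb n)"
  have "emp_loss h S \<le> emp_loss g S + eps"
    using assms(1) INF_emp_loss_le[OF assms(2)] unfolding learns_agnostic_def S_def h_def
    by (meson add_right_mono order_trans)
  moreover have "real (length S) > 0"
    using assms(3) unfolding S_def by (metis length_greater_0_conv of_nat_0_less_iff)
  ultimately have "real (mistakes h S) \<le> real (mistakes g S) + eps * real (length S)"
    by (simp add: emp_loss_mistakes field_simps)
  then show ?thesis unfolding S_def h_def .
qed

definition labelled_by :: "(nat \<Rightarrow> bool) \<Rightarrow> nat \<Rightarrow> real sample" where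
  "labelled_by Q m = map (\<lambda>i. (real i, Q i)) [1..<Suc m]"

abbreviation alice_input :: "nat set \<Rightarrow> nat \<Rightarrow> real sample" where
  "alice_input A m \<equiv> labelled_by (\<lambda>i. i \<in> A) m"

abbreviation bob_input :: "nat set \<Rightarrow> nat \<Rightarrow> real sample" where
  "bob_input A m \<equiv> labelled_by (\<lambda>i. i \<notin> A) m"

lemma length_labelled_by [simp]: "length (labelled_by Q m) = m"
  by (simp add: labelled_by_def)

lemma set_labelled_by: "set (labelled_by Q m) \<subseteq> real ` {1..m} \<times> UNIV"
  by (auto simp: labelled_by_def)

lemma mistakes_labelled_by:
  "mistakes h (labelled_by Q m) = (\<Sum>i=1..m. of_bool (h (real i) \<noteq> Q i))"
  by (induction m) (auto simp: mistakes_def labelled_by_def)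

text \<open>Each point carries the labels \<open>i \<in> A\<close>, \<open>i \<notin> B\<close>, \<open>i \<in> B\<close>, \<open>i \<notin> A\<close> in the two crossed
  samples, two of which are true.\<close>
lemma mistakes_crossed_inputs:
  "mistakes h (alice_input A m @ bob_input B m) + mistakes h (alice_input B m @ bob_input A m)
   = 2 * m"
proof -
  have "mistakes h (alice_input A m @ bob_input B m) + mistakes h (alice_input B m @ bob_input A m)
    = (\<Sum>i=1..m. of_bool (h (real i) \<noteq> (i \<in> A)) + of_bool (h (real i) \<noteq> (i \<notin> B))
        + of_bool (h (real i) \<noteq> (i \<in> B)) + of_bool (h (real i) \<noteq> (i \<notin> A)))"
    by (simp add: mistakes_append mistakes_labelled_by sum.distrib)
  also have "\<dots> = (\<Sum>i=1..m. 2)" by (rule sum.cong) auto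
  finally show ?thesis by simp
qed

text \<open>The point \<open>0\<close> lies outside the samples, so its indicator acts as the constant \<open>False\<close>;
  at \<open>j\<close> both hypotheses are correct, and every other point costs 2 as above.\<close>
lemma mistakes_crossed_inputs_point_indicators:
  assumes "j \<in> {1..m}" "j \<in> A" "j \<notin> B"
  shows "mistakes (\<lambda>x. x = real j) (alice_input A m @ bob_input B m)
    + mistakes (\<lambda>x. x = 0) (alice_input B m @ bob_input A m) = 2 * m - 2"
proof -
  define g where "g i = of_bool ((real i = real j) \<noteq> (i \<in> A)) + of_bool ((real i = real j) \<noteq> (i \<notin> B))
    + of_bool ((real i = 0) \<noteq> (i \<in> B)) + (of_bool ((real i = 0) \<noteq> (i \<notin> A)) :: nat)" for i
  have "mistakes (\<lambda>x. x = real j) (alice_input A m @ bob_input B m)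
      + mistakes (\<lambda>x. x = 0) (alice_input B m @ bob_input A m) = sum g {1..m}"
    by (simp add: g_def mistakes_append mistakes_labelled_by sum.distrib)
  also have "\<dots> = g j + sum g ({1..m} - {j})"
    using assms(1) by (simp add: sum.remove)
  also have "g j = 0" using assms by (simp add: g_def)
  also have "sum g ({1..m} - {j}) = (\<Sum>i\<in>{1..m} - {j}. 2)"
    using assms by (intro sum.cong) (auto simp: g_def)
  finally show ?thesis using assms(1) by simp
qed

definition point_indicators :: "(real \<Rightarrow> bool) set" where
  "point_indicators = range (\<lambda>r x. x = r)"

lemma VC_dim_point_indicators: "VC_dim_eq point_indicators 1"
  unfolding VC_dim_eq_def
proof (intro conjI allI impI)
  have "\<exists>h\<in>point_indicators. \<forall>x\<in>{0}. h x = (x \<in> B)" if "B \<subseteq> {0}" for B :: "real set"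
  proof (cases "B = {}")
    case True
    then show ?thesis by (intro bexI[of _ "\<lambda>x. x = 1"]) (auto simp: point_indicators_def)
  next
    case False
    with that have "B = {0}" by blast
    then show ?thesis by (intro bexI[of _ "\<lambda>x. x = 0"]) (auto simp: point_indicators_def)
  qed
  then have "shatters point_indicators {0}" unfolding shatters_def by blast
  then show "\<exists>A. finite A \<and> card A = 1 \<and> shatters point_indicators A"
    by (intro exI[of _ "{0}"]) simp
next
  fix A :: "real set" assume "finite A \<and> shatters point_indicators A"
  then obtain h where "h \<in> point_indicators" "\<forall>x\<in>A. h x = (x \<in> A)"
    unfolding shatters_def by blast
  then obtain r where "A \<subseteq> {r}" unfolding point_indicators_def by auto
  then show "card A \<le> 1" using card_mono[of "{r}" A] by simp
qed

lemma transcripts_of_fooling_inputs_differ: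
  assumes learn: "learns_agnostic P n point_indicators eps"
    and small: "2 * eps * real m < 1"
    and j: "j \<in> {1..m}" "j \<in> A" "j \<notin> B"
  shows "transcript P (alice_input A m) (bob_input A m) n
    \<noteq> transcript P (alice_input B m) (bob_input B m) n"
proof
  assume same: "transcript P (alice_input A m) (bob_input A m) n
    = transcript P (alice_input B m) (bob_input B m) n"
  define h where "h = out P (transcript P (alice_input A m) (bob_input A m) n)"
  let ?SAB = "alice_input A m @ bob_input B m" and ?SBA = "alice_input B m @ bob_input A m"
  have h: "h = out P (transcript P (alice_input A m) (bob_input B m) n)"
    "h = out P (transcript P (alice_input B m) (bob_input A m) n)"
    unfolding h_def using transcript_rectangle[OF same] transcript_rectangle[OF same[symmetric]] same
    by simp_all
  have nonempty: "?SAB \<noteq> []" "?SBA \<noteq> []" using j(1) by (auto simp: labelled_by_def)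
  have "(\<lambda>x. x = real j) \<in> point_indicators" "(\<lambda>x. x = 0) \<in> point_indicators"
    unfolding point_indicators_def by auto
  from learns_agnostic_mistakes[OF learn this(1) nonempty(1)]
    learns_agnostic_mistakes[OF learn this(2) nonempty(2)]
  have "real (mistakes h ?SAB) \<le> real (mistakes (\<lambda>x. x = real j) ?SAB) + eps * (2 * m)"
    "real (mistakes h ?SBA) \<le> real (mistakes (\<lambda>x. x = 0) ?SBA) + eps * (2 * m)"
    by (simp_all add: h[symmetric])
  moreover have "real (mistakes h ?SAB) + real (mistakes h ?SBA) = 2 * m"
    using mistakes_crossed_inputs[of h A m B] by (metis of_nat_add of_nat_mult of_nat_numeral)
  moreover have "real (mistakes (\<lambda>x. x = real j) ?SAB) + real (mistakes (\<lambda>x. x = 0) ?SBA)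
      = 2 * real m - 2"
    using mistakes_crossed_inputs_point_indicators[OF j] j(1) by (simp flip: of_nat_add add: of_nat_diff)
  ultimately have "1 \<le> 2 * eps * real m" by linarith
  then show False using small by simp
qed

lemma card_messages_le:
  "card (range Bit \<union> Example ` (real ` {1..m} \<times> UNIV)) \<le> 2 * m + 2"
proof -
  have "card (Example ` (real ` {1..m} \<times> (UNIV :: bool set)))
      \<le> card (real ` {1..m} \<times> (UNIV :: bool set))"
    by (rule card_image_le) simp
  also have "\<dots> = card (real ` {1..m}) * 2" by (simp add: card_cartesian_product)
  also have "\<dots> \<le> m * 2" using card_image_le[of "{1..m}" real] by simp
  finally have "card (Example ` (real ` {1..m} \<times> (UNIV :: bool set))) \<le> 2 * m" by simp
  moreover have "card (range Bit :: real message set) \<le> 2"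
    using card_image_le[of "UNIV :: bool set" Bit] by simp
  ultimately show ?thesis
    using card_Un_le[of "range Bit" "Example ` (real ` {1..m} \<times> (UNIV :: bool set))"] by linarith
qed

lemma fooling_set_bound:
  assumes valid: "valid_protocol P" and learn: "learns_agnostic P n point_indicators eps"
    and small: "2 * eps * real m < 1"
  shows "2 ^ m \<le> (n + 1) * (2 * m + 2) ^ n"
proof -
  define F where "F A = transcript P (alice_input A m) (bob_input A m) n" for A
  define M where "M = range Bit \<union> Example ` (real ` {1..m} \<times> (UNIV :: bool set))"
  have differ: "F A \<noteq> F B" if "A \<subseteq> {1..m}" "j \<in> A" "j \<notin> B" for A B j
    using transcripts_of_fooling_inputs_differ[OF learn small _ that(2,3)] that(1,2)
    unfolding F_def by blast
  have "inj_on F (Pow {1..m})"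
  proof (rule inj_onI, rule ccontr)
    fix A B assume AB: "A \<in> Pow {1..m}" "B \<in> Pow {1..m}" "F A = F B" "A \<noteq> B"
    then obtain j where "j \<in> A \<and> j \<notin> B \<or> j \<in> B \<and> j \<notin> A" by blast
    then show False
      using differ[of A j B] differ[of B j A] AB by auto
  qed
  then have "card (Pow {1..m}) = card (F ` Pow {1..m})" by (simp add: card_image)
  also have "\<dots> \<le> card {xs. set xs \<subseteq> M \<and> length xs \<le> n}"
  proof (rule card_mono)
    show "finite {xs. set xs \<subseteq> M \<and> length xs \<le> n}"
      by (rule finite_lists_length_le) (simp add: M_def)
    show "F ` Pow {1..m} \<subseteq> {xs. set xs \<subseteq> M \<and> length xs \<le> n}"
    proof
      fix xs assume "xs \<in> F ` Pow {1..m}"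
      then obtain A where xs: "xs = F A" by blast
      have "set xs \<subseteq> M"
        using set_transcript_subset[OF valid, of "alice_input A m" "bob_input A m" n]
          set_labelled_by[of "\<lambda>i. i \<in> A" m] set_labelled_by[of "\<lambda>i. i \<notin> A" m]
        unfolding xs F_def M_def by blast
      then show "xs \<in> {xs. set xs \<subseteq> M \<and> length xs \<le> n}"
        using length_transcript_le unfolding xs F_def by simp
    qed
  qed
  also have "\<dots> \<le> (n + 1) * (2 * m + 2) ^ n"
  proof (rule card_lists_length_le_bound)
    show "card M \<le> 2 * m + 2" unfolding M_def by (rule card_messages_le)
  qed (simp_all add: M_def)
  finally show ?thesis by (simp add: card_Pow)
qed

lemma ln_bound_from_counting:
  assumes "2 ^ m \<le> (n + 1) * K ^ n" "1 \<le> K"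
  shows "real m * ln 2 \<le> real n * (1 + ln (real K))"
proof -
  have "(2::real) ^ m \<le> (real n + 1) * real K ^ n"
    using of_nat_mono[OF assms(1), where 'a=real] by (simp add: algebra_simps)
  then have "ln (2 ^ m) \<le> ln ((real n + 1) * real K ^ n)"
    using assms(2) by (subst ln_le_cancel_iff) auto
  then have "real m * ln 2 \<le> ln (real n + 1) + real n * ln (real K)"
    using assms(2) by (simp add: ln_mult ln_realpow)
  moreover have "ln (real n + 1) \<le> real n" using ln_le_minus_one[of "real n + 1"] by simp
  ultimately show ?thesis by (simp add: algebra_simps)
qed

lemma eps_lower_bound_from_counting:
  assumes eps: "0 < eps" "eps < 1/8"
    and counting: "\<And>m. 2 * eps * real m < 1 \<Longrightarrow> 2 ^ m \<le> (n + 1) * (2 * m + 2) ^ n"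
  shows "1 / (32 * eps * ln (1 / eps)) \<le> real n"
proof -
  define m where "m = nat \<lfloor>1 / (4 * eps)\<rfloor>"
  define L where "L = ln (1 / eps)"
  have "1 / (4 * eps) > 2" using eps by (simp add: field_simps)
  then have m: "real m \<le> 1 / (4 * eps)" "1 / (4 * eps) - 1 \<le> real m"
    unfolding m_def by linarith+
  have "2 * eps * real m \<le> 1 / 2"
    using mult_left_mono[OF m(1), of "2 * eps"] eps by simp
  then have "real m * ln 2 \<le> real n * (1 + ln (real (2 * m + 2)))"
    using counting by (intro ln_bound_from_counting) simp_all
  also have "\<dots> \<le> real n * (1 + L)"
  proof -
    have "real (2 * m + 2) \<le> 1 / eps" using m(1) eps by (simp add: field_simps)
    then have "ln (real (2 * m + 2)) \<le> L" unfolding L_def using eps by (subst ln_le_cancel_iff) simp_all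
    then show ?thesis by (simp add: mult_left_mono)
  qed
  finally have upper: "real m * ln 2 \<le> real n * (1 + L)" .
  have L: "1 \<le> L"
  proof -
    have "eps * exp 1 \<le> eps * 3" using exp_le eps by (intro mult_left_mono) simp_all
    then have "eps * exp 1 \<le> 1" using eps by linarith
    then have "exp 1 \<le> 1 / eps" using eps by (simp add: field_simps)
    then have "ln (exp 1) \<le> L" unfolding L_def using eps by (subst ln_le_cancel_iff) simp_all
    then show ?thesis by simp
  qed
  have "real m * (1 / 2) \<le> real m * ln 2"
    using ln_diff_le[of 1 2] by (intro mult_left_mono) simp_all
  moreover have "real n * (1 + L) \<le> real n * (2 * L)" using L by (intro mult_left_mono) simp_all
  ultimately have "real m \<le> 4 * real n * L" using upper by linarith
  then have "8 * eps * real m \<le> 8 * eps * (4 * real n * L)" using eps by (intro mult_left_mono) simp_all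
  moreover have "1 \<le> 8 * eps * real m" using m(2) eps by (simp add: field_simps)
  ultimately have "1 \<le> 32 * eps * L * real n" by (simp add: mult_ac)
  then show ?thesis using eps L unfolding L_def by (simp add: field_simps)
qed

theorem theorem3:
  shows "\<exists>H :: (real \<Rightarrow> bool) set. VC_dim_eq H 1 \<and>
    (\<exists>c > 0. \<exists>k :: nat. \<exists>eps0 > 0.
       \<forall>eps P n. 0 < eps \<and> eps < eps0 \<and> valid_protocol P \<and> complexity_le P n
                 \<and> learns_agnostic P n H eps
         \<longrightarrow> c / (eps * (ln (1 / eps)) ^ k) \<le> real n)"
proof (intro exI conjI allI impI)
  show "VC_dim_eq point_indicators 1" by (rule VC_dim_point_indicators)
  fix eps :: real and P n
  assume "0 < eps \<and> eps < 1/8 \<and> valid_protocol P \<and> complexity_le P n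
    \<and> learns_agnostic P n point_indicators eps"
  then have "1 / (32 * eps * ln (1 / eps)) \<le> real n"
    using eps_lower_bound_from_counting fooling_set_bound by blast
  then show "1 / 32 / (eps * ln (1 / eps) ^ 1) \<le> real n" by simp
qed simp_all

end
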